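(* Let $n\in\mathbb N$, let $K_1,\dots,K_n$ be singular kernel functions and let $J$ be an arbitrary $n$-field function. Then for each $j\in\{0,1,\dots,n\}$ the function $m_j:\overline S\to[-\infty,\infty)$ is continuous in the extended sense. That is, at points $\mathbf y$ with $m_j(\mathbf y)=-\infty$ one has $m_j(\mathbf x)\to-\infty$ as $\mathbf x\to\mathbf y$.
   Context: A kernel function is a function $K:(-1,0)\cup(0,1)\to\mathbb R$ that is concave on $(-1,0)$ and concave on $(0,1)$ and satisfies $\lim_{t\downarrow0}K(t)=\lim_{t\uparrow0}K(t)$. It is extended to $[-1,1]$ with values in $[-\infty,\infty)$ by its one-sided limits at $-1,0,1$. A kernel function is singular if $K(0)=-\infty$. An $n$-field function is a function $J:[0,1]\to[-\infty,\infty)$ that is bounded above and whose set of finite values has total weight strictly greater than $n$. Here the points $0$ and $1$ each have weight $1/2$ and every point of $(0,1)$ has weight $1$. No continuity of $J$ is assumed. $\overline S=\{\mathbf y\in\mathbb R^n:0\le y_1\le\dots\le y_n\le1\}$. $F(\mathbf y,t)=J(t)+\sum_{i=1}^nK_i(t-y_i)$, with the convention $a+(-\infty)=-\infty$. Set $y_0:=0$ and $y_{n+1}:=1$. For $j=0,\dots,n$ let $I_j(\mathbf y)=[y_j,y_{j+1}]$ and $m_j(\mathbf y)=\sup_{t\in I_j(\mathbf y)}F(\mathbf y,t)$. *)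

theory Defs
  imports "HOL-Analysis.Analysis" "HOL-Library.Extended_Real"
begin

text \<open>Values live in ereal; only [-\<infinity>,\<infinity>) occurs.\<close>
definition kernel_function :: "(real \<Rightarrow> ereal) \<Rightarrow> bool" where
  "kernel_function K \<longleftrightarrow>
     (\<forall>t \<in> {-1<..<0} \<union> {0<..<1}. \<bar>K t\<bar> \<noteq> \<infinity>) \<and>
     concave_on {-1<..<0} (\<lambda>t. real_of_ereal (K t)) \<and>
     concave_on {0<..<1} (\<lambda>t. real_of_ereal (K t)) \<and>
     (K \<longlongrightarrow> K 0) (at_left 0) \<and> (K \<longlongrightarrow> K 0) (at_right 0) \<and>
     (K \<longlongrightarrow> K (-1)) (at_right (-1)) \<and> (K \<longlongrightarrow> K 1) (at_left 1)"

definition singular_kernel :: "(real \<Rightarrow> ereal) \<Rightarrow> bool" where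
  "singular_kernel K \<longleftrightarrow> kernel_function K \<and> K 0 = -\<infinity>"

definition field_weight :: "real set \<Rightarrow> ereal" where
  "field_weight A =
     (if finite (A \<inter> {0<..<1})
      then ereal (real (card (A \<inter> {0<..<1})) + (if 0 \<in> A then 1/2 else 0)
                  + (if 1 \<in> A then 1/2 else 0))
      else \<infinity>)"

definition n_field_function :: "nat \<Rightarrow> (real \<Rightarrow> ereal) \<Rightarrow> bool" where
  "n_field_function n J \<longleftrightarrow>
     (\<exists>M::real. \<forall>t\<in>{0..1}. J t \<le> ereal M) \<and>
     field_weight {t \<in> {0..1}. J t \<noteq> -\<infinity>} > ereal (real n)"

text \<open>Points y = (y_1,...,y_n) are functions nat \<Rightarrow> real vanishing outside {1..n};
  on this set the product topology coincides with the Euclidean topology of R^n.\<close>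
definition Sbar :: "nat \<Rightarrow> (nat \<Rightarrow> real) set" where
  "Sbar n = {y. (\<forall>i. (i = 0 \<or> n < i) \<longrightarrow> y i = 0) \<and>
                (\<forall>i\<in>{1..n}. 0 \<le> y i \<and> y i \<le> 1) \<and>
                (\<forall>i\<in>{1..<n}. y i \<le> y (Suc i))}"

definition Ffun :: "(real \<Rightarrow> ereal) \<Rightarrow> (nat \<Rightarrow> real \<Rightarrow> ereal) \<Rightarrow> nat \<Rightarrow> (nat \<Rightarrow> real) \<Rightarrow> real \<Rightarrow> ereal" where
  "Ffun J K n y t = J t + (\<Sum>i\<in>{1..n}. K i (t - y i))"

definition ypt :: "nat \<Rightarrow> (nat \<Rightarrow> real) \<Rightarrow> nat \<Rightarrow> real" where
  "ypt n y j = (if j = 0 then 0 else if j = Suc n then 1 else y j)"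

definition mfun :: "(real \<Rightarrow> ereal) \<Rightarrow> (nat \<Rightarrow> real \<Rightarrow> ereal) \<Rightarrow> nat \<Rightarrow> nat \<Rightarrow> (nat \<Rightarrow> real) \<Rightarrow> ereal" where
  "mfun J K n j y = (SUP t \<in> {ypt n y j .. ypt n y (Suc j)}. Ffun J K n y t)"

end

theory Submission
  imports Defs
begin

text \<open>Write \<open>F(y,t) = J(t) + G(y,t)\<close> with \<open>G(y,t) = \<Sum>i. K\<^sub>i(t - y\<^sub>i)\<close>. A concave function is
  bounded above near the ends of its interval, so the kernels never take the value \<open>\<infinity>\<close> and
  are continuous into \<open>[-\<infinity>,\<infinity>)\<close>; hence \<open>G\<close> is jointly continuous on \<open>S \<times> [0,1]\<close>, and
  \<open>G(y,y\<^sub>i) = -\<infinity>\<close> by singularity.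

  Lower semicontinuity of \<open>m\<^sub>j\<close>: at a point \<open>t\<close> where \<open>F(y,t)\<close> exceeds a given level,
  \<open>G(y,t)\<close> is finite, so \<open>t\<close> is none of the moving endpoints \<open>y\<^sub>i\<close>; hence \<open>t \<in> I\<^sub>j(x)\<close> for
  \<open>x\<close> near \<open>y\<close>, and \<open>F(x,t) \<rightarrow> F(y,t)\<close>.

  Upper semicontinuity: near each \<open>t \<in> [0,1]\<close>, either \<open>G(y,t) = -\<infinity>\<close>, and \<open>F\<close> stays below
  any level near \<open>(y,t)\<close> because \<open>J\<close> is bounded above; or \<open>G(y,t)\<close> is finite, \<open>t\<close> is no moving
  endpoint, so near \<open>t\<close> the intervals \<open>I\<^sub>j(x)\<close> do not leave \<open>I\<^sub>j(y)\<close> and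
  \<open>F(x,s) \<le> F(y,s) + \<epsilon> \<le> m\<^sub>j(y) + \<epsilon>\<close>. Compactness of \<open>[0,1]\<close> makes this uniform in \<open>t\<close>.
  No continuity of \<open>J\<close> is needed since \<open>J\<close> is only compared with itself at the same point.\<close>

lemma concave_on_bounded_above_left:
  fixes f :: "real \<Rightarrow> real"
  assumes f: "concave_on {a<..<b} f" and pq: "a < p" "p < q" "q < b" and u: "a < u" "u < p"
  shows "f u \<le> f p + (p - a) * \<bar>(f p - f q) / (p - q)\<bar>"
proof -
  define s where "s = (f p - f q) / (p - q)"
  have g: "convex_on {a<..<b} (\<lambda>x. - f x)" using f by (simp add: concave_on_def)
  have "(- f u - - f p) / (u - p) \<le> (- f p - - f q) / (p - q)"
    using convex_on_slope_le[OF g, of u q p] pq u by auto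
  then have "f p - f u \<ge> s * (p - u)" using u by (simp add: s_def field_simps)
  moreover have "\<bar>s\<bar> * (p - u) \<le> \<bar>s\<bar> * (p - a)" using u by (intro mult_left_mono) auto
  moreover have "\<bar>s * (p - u)\<bar> = \<bar>s\<bar> * (p - u)" using u by (simp add: abs_mult)
  ultimately have "f u \<le> f p + \<bar>s\<bar> * (p - a)" by arith
  then show ?thesis by (simp add: s_def mult.commute)
qed

lemma concave_on_bounded_above_right:
  fixes f :: "real \<Rightarrow> real"
  assumes f: "concave_on {a<..<b} f" and pq: "a < p" "p < q" "q < b" and u: "q < u" "u < b"
  shows "f u \<le> f q + (b - q) * \<bar>(f p - f q) / (p - q)\<bar>"
proof -
  define s where "s = (f p - f q) / (p - q)"
  have g: "convex_on {a<..<b} (\<lambda>x. - f x)" using f by (simp add: concave_on_def)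
  have "(- f p - - f q) / (p - q) \<le> (- f q - - f u) / (q - u)"
    using convex_on_slope_le[OF g, of p u q] pq u by auto
  then have "f u - f q \<le> s * (u - q)" using u by (simp add: s_def field_simps)
  moreover have "\<bar>s\<bar> * (u - q) \<le> \<bar>s\<bar> * (b - q)" using u by (intro mult_left_mono) auto
  moreover have "\<bar>s * (u - q)\<bar> = \<bar>s\<bar> * (u - q)" using u by (simp add: abs_mult)
  ultimately have "f u \<le> f q + \<bar>s\<bar> * (b - q)" by arith
  then show ?thesis by (simp add: s_def mult.commute)
qed

lemma concave_on_continuous:
  fixes f :: "'a::euclidean_space \<Rightarrow> real"
  assumes "open S" "concave_on S f"
  shows "continuous_on S f"
proof -
  have "continuous_on S (\<lambda>x. - f x)"
    using assms by (intro convex_on_continuous) (simp_all add: concave_on_def)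
  then show ?thesis using continuous_on_minus by fastforce
qed

lemma concave_on_tendsto_at_right_not_PInfty:
  fixes K :: "real \<Rightarrow> ereal"
  assumes "a < b" and concave: "concave_on {a<..<b} (\<lambda>t. real_of_ereal (K t))"
    and finite: "\<forall>t\<in>{a<..<b}. \<bar>K t\<bar> \<noteq> \<infinity>" and lim: "(K \<longlongrightarrow> L) (at_right a)"
  shows "L \<noteq> \<infinity>"
proof -
  let ?f = "\<lambda>t. real_of_ereal (K t)"
  define p where "p = a + (b - a) / 3"
  define q where "q = a + 2 * (b - a) / 3"
  define B where "B = ?f p + (p - a) * \<bar>(?f p - ?f q) / (p - q)\<bar>"
  have pq: "a < p" "p < q" "q < b" using \<open>a < b\<close> by (simp_all add: p_def q_def field_simps)
  have "K t \<le> ereal B" if "a < t" "t < p" for t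
  proof -
    have "?f t \<le> B" unfolding B_def using concave_on_bounded_above_left[OF concave pq that] .
    moreover have "\<bar>K t\<bar> \<noteq> \<infinity>" using finite that pq by auto
    ultimately show ?thesis by (cases "K t") auto
  qed
  then have "eventually (\<lambda>t. K t \<le> ereal B) (at_right a)"
    unfolding eventually_at_right_field using pq by blast
  then have "L \<le> ereal B" using lim by (intro tendsto_upperbound) auto
  then show ?thesis by auto
qed

lemma concave_on_tendsto_at_left_not_PInfty:
  fixes K :: "real \<Rightarrow> ereal"
  assumes "a < b" and concave: "concave_on {a<..<b} (\<lambda>t. real_of_ereal (K t))"
    and finite: "\<forall>t\<in>{a<..<b}. \<bar>K t\<bar> \<noteq> \<infinity>" and lim: "(K \<longlongrightarrow> L) (at_left b)"
  shows "L \<noteq> \<infinity>"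
proof -
  let ?f = "\<lambda>t. real_of_ereal (K t)"
  define p where "p = a + (b - a) / 3"
  define q where "q = a + 2 * (b - a) / 3"
  define B where "B = ?f q + (b - q) * \<bar>(?f p - ?f q) / (p - q)\<bar>"
  have pq: "a < p" "p < q" "q < b" using \<open>a < b\<close> by (simp_all add: p_def q_def field_simps)
  have "K t \<le> ereal B" if "q < t" "t < b" for t
  proof -
    have "?f t \<le> B" unfolding B_def using concave_on_bounded_above_right[OF concave pq that] .
    moreover have "\<bar>K t\<bar> \<noteq> \<infinity>" using finite that pq by auto
    ultimately show ?thesis by (cases "K t") auto
  qed
  then have "eventually (\<lambda>t. K t \<le> ereal B) (at_left b)"
    unfolding eventually_at_left_field using pq by blast
  then have "L \<le> ereal B" using lim by (intro tendsto_upperbound) auto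
  then show ?thesis by auto
qed

lemma kernel_function_not_PInfty:
  assumes "kernel_function K" "u \<in> {-1..1}"
  shows "K u \<noteq> \<infinity>"
proof -
  have finite: "\<forall>t\<in>{-1<..<0} \<union> {0<..<1}. \<bar>K t\<bar> \<noteq> \<infinity>"
    using assms(1) by (simp add: kernel_function_def)
  consider "u = -1" | "u = 0" | "u = 1" | "u \<in> {-1<..<0} \<union> {0<..<1}" using assms(2) by force
  then show ?thesis
  proof cases
    case 1
    then show ?thesis using assms(1) finite
      by (intro concave_on_tendsto_at_right_not_PInfty[of "-1" 0 K]) (auto simp: kernel_function_def)
  next
    case 2
    then show ?thesis using assms(1) finite
      by (intro concave_on_tendsto_at_right_not_PInfty[of 0 1 K]) (auto simp: kernel_function_def)
  next
    case 3
    then show ?thesis using assms(1) finite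
      by (intro concave_on_tendsto_at_left_not_PInfty[of 0 1 K]) (auto simp: kernel_function_def)
  next
    case 4
    then have "\<bar>K u\<bar> \<noteq> \<infinity>" using finite by (rule bspec[rotated])
    then show ?thesis by auto
  qed
qed

lemma kernel_function_continuous:
  assumes "kernel_function K"
  shows "continuous_on {-1..1} K"
proof -
  let ?f = "\<lambda>t. real_of_ereal (K t)"
  have K: "concave_on {-1<..<0} ?f" "concave_on {0<..<1} ?f"
    "\<forall>t\<in>{-1<..<0} \<union> {0<..<1}. \<bar>K t\<bar> \<noteq> \<infinity>"
    "(K \<longlongrightarrow> K 0) (at_left 0)" "(K \<longlongrightarrow> K 0) (at_right 0)"
    "(K \<longlongrightarrow> K (-1)) (at_right (-1))" "(K \<longlongrightarrow> K 1) (at_left 1)"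
    using assms by (simp_all add: kernel_function_def)
  have "continuous_on ({-1<..<0} \<union> {0<..<1}) (\<lambda>t. ereal (?f t))"
    using K(1,2) by (intro continuous_on_ereal continuous_on_open_Un concave_on_continuous) auto
  moreover have "ereal (?f t) = K t" if "t \<in> {-1<..<0} \<union> {0<..<1}" for t
  proof -
    have "\<bar>K t\<bar> \<noteq> \<infinity>" using K(3) that by (rule bspec)
    then show ?thesis by (cases "K t") auto
  qed
  ultimately have inner: "continuous_on ({-1<..<0} \<union> {0<..<1}) K"
    by (rule continuous_on_eq)
  show ?thesis
    unfolding continuous_on_eq_continuous_within
  proof
    fix u :: real assume "u \<in> {-1..1}"
    then consider "u = -1" | "u = 0" | "u = 1" | "u \<in> {-1<..<0} \<union> {0<..<1}" by force
    then show "continuous (at u within {-1..1}) K"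
    proof cases
      case 1
      then show ?thesis using K(6) by (simp add: continuous_within at_within_Icc_at_right)
    next
      case 2
      then have "(K \<longlongrightarrow> K u) (at u)" using K(4,5) filterlim_split_at by blast
      then show ?thesis unfolding continuous_within by (rule tendsto_within_subset) simp
    next
      case 3
      then show ?thesis using K(7) by (simp add: continuous_within at_within_Icc_at_left)
    next
      case 4
      then have "isCont K u"
        using inner by (subst (asm) continuous_on_eq_continuous_at) auto
      then show ?thesis by (rule continuous_at_imp_continuous_within)
    qed
  qed
qed

lemma tendsto_sum_ereal_not_PInfty:
  fixes f :: "'i \<Rightarrow> 'a \<Rightarrow> ereal"
  assumes "\<And>i. i \<in> A \<Longrightarrow> (f i \<longlongrightarrow> a i) F" and "\<And>i. i \<in> A \<Longrightarrow> a i \<noteq> \<infinity>"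
  shows "((\<lambda>x. \<Sum>i\<in>A. f i x) \<longlongrightarrow> (\<Sum>i\<in>A. a i)) F"
proof (cases "finite A")
  case True
  then show ?thesis using assms
  proof (induction A rule: finite_induct)
    case (insert i A)
    have "(\<Sum>k\<in>A. a k) \<noteq> \<infinity>" using insert.prems(2) by (simp add: sum_Pinfty)
    then show ?case using insert by (simp add: tendsto_add_ereal_general)
  qed simp
qed simp

lemma continuous_on_Times_rectangle:
  assumes "continuous_on (A \<times> B) f" "a \<in> A" "b \<in> B" "open W" "f (a, b) \<in> W"
  obtains U V where "open U" "open V" "a \<in> U" "b \<in> V" "\<forall>x\<in>U \<inter> A. \<forall>s\<in>V \<inter> B. f (x, s) \<in> W"
proof -
  obtain Q where "open Q" and Q: "Q \<inter> (A \<times> B) = f -` W \<inter> (A \<times> B)"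
    using assms(1,4) unfolding continuous_on_open_invariant by blast
  have "(a, b) \<in> Q" using Q assms(2,3,5) by blast
  with \<open>open Q\<close> obtain U V where "open U" "open V" "(a, b) \<in> U \<times> V" "U \<times> V \<subseteq> Q"
    by (rule open_prod_elim)
  then show ?thesis using Q by (intro that) auto
qed

lemma eventually_ball_compactI:
  assumes "compact T"
    and "\<And>t. t \<in> T \<Longrightarrow> \<exists>V. open V \<and> t \<in> V \<and> eventually (\<lambda>x. \<forall>s\<in>V \<inter> T. P x s) F"
  shows "eventually (\<lambda>x. \<forall>s\<in>T. P x s) F"
proof -
  obtain V where V: "\<And>t. t \<in> T \<Longrightarrow> open (V t) \<and> t \<in> V t \<and> eventually (\<lambda>x. \<forall>s\<in>V t \<inter> T. P x s) F"
    using assms(2) by metis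
  obtain C where C: "C \<subseteq> T" "finite C" "T \<subseteq> (\<Union>t\<in>C. V t)"
    using compactE_image[OF assms(1), of T V] V by blast
  have "eventually (\<lambda>x. \<forall>t\<in>C. \<forall>s\<in>V t \<inter> T. P x s) F"
    using C(1,2) V by (subst eventually_ball_finite_distrib) auto
  then show ?thesis by eventually_elim (use C(3) in blast)
qed

lemma tendsto_lower_endpoint_stable:
  fixes a :: "'a \<Rightarrow> real"
  assumes "(a \<longlongrightarrow> a0) F" "a0 \<noteq> t"
  obtains V where "open V" "t \<in> V" "eventually (\<lambda>x. \<forall>s\<in>V. a x \<le> s \<longrightarrow> a0 \<le> s) F"
proof (cases "a0 < t")
  case True
  then show ?thesis by (intro that[of "{a0<..}"]) auto
next
  case False
  define m where "m = (t + a0) / 2"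
  have "t < m" "m < a0" using False assms(2) by (simp_all add: m_def)
  then have "eventually (\<lambda>x. m < a x) F" using assms(1) by (simp add: order_tendstoD(1))
  then show ?thesis using \<open>t < m\<close> by (intro that[of "{..<m}"]) (auto elim: eventually_mono)
qed

lemma tendsto_upper_endpoint_stable:
  fixes b :: "'a \<Rightarrow> real"
  assumes "(b \<longlongrightarrow> b0) F" "b0 \<noteq> t"
  obtains V where "open V" "t \<in> V" "eventually (\<lambda>x. \<forall>s\<in>V. s \<le> b x \<longrightarrow> s \<le> b0) F"
proof (cases "t < b0")
  case True
  then show ?thesis by (intro that[of "{..<b0}"]) auto
next
  case False
  define m where "m = (t + b0) / 2"
  have "m < t" "b0 < m" using False assms(2) by (simp_all add: m_def)
  then have "eventually (\<lambda>x. b x < m) F" using assms(1) by (simp add: order_tendstoD(2))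
  then show ?thesis using \<open>m < t\<close> by (intro that[of "{m<..}"]) (auto elim: eventually_mono)
qed

definition kernel_sum :: "(nat \<Rightarrow> real \<Rightarrow> ereal) \<Rightarrow> nat \<Rightarrow> (nat \<Rightarrow> real) \<Rightarrow> real \<Rightarrow> ereal" where
  "kernel_sum K n y t = (\<Sum>i\<in>{1..n}. K i (t - y i))"

lemma Ffun_eq_kernel_sum: "Ffun J K n y t = J t + kernel_sum K n y t"
  by (simp add: Ffun_def kernel_sum_def)

lemma Sbar_coordinate: "y \<in> Sbar n \<Longrightarrow> i \<in> {1..n} \<Longrightarrow> y i \<in> {0..1}"
  by (simp add: Sbar_def)

lemma ypt_interval_subset: "y \<in> Sbar n \<Longrightarrow> j \<le> n \<Longrightarrow> {ypt n y j .. ypt n y (Suc j)} \<subseteq> {0..1}"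
  using Sbar_coordinate[of y n j] Sbar_coordinate[of y n "Suc j"] by (auto simp: ypt_def)

lemma tendsto_ypt: "((\<lambda>x. ypt n x k) \<longlongrightarrow> ypt n y k) (at y within S)"
proof -
  have "((\<lambda>x::nat \<Rightarrow> real. x k) \<longlongrightarrow> y k) (at y within S)"
    using continuous_on_product_coordinates[of k]
    by (auto simp: continuous_on_def intro: tendsto_within_subset)
  then show ?thesis by (simp add: ypt_def)
qed

lemma kernel_not_PInfty_on_Sbar:
  fixes t :: real
  assumes "\<forall>i\<in>{1..n}. kernel_function (K i)" "y \<in> Sbar n" "t \<in> {0..1}" "i \<in> {1..n}"
  shows "K i (t - y i) \<noteq> \<infinity>"
  using assms Sbar_coordinate[OF assms(2,4)] by (intro kernel_function_not_PInfty) auto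

lemma kernel_sum_not_PInfty:
  fixes t :: real
  assumes "\<forall>i\<in>{1..n}. kernel_function (K i)" "y \<in> Sbar n" "t \<in> {0..1}"
  shows "kernel_sum K n y t \<noteq> \<infinity>"
  using kernel_not_PInfty_on_Sbar[OF assms] by (simp add: kernel_sum_def sum_Pinfty)

lemma continuous_on_kernel_sum:
  assumes K: "\<forall>i\<in>{1..n}. kernel_function (K i)"
  shows "continuous_on (Sbar n \<times> {0..1::real}) (\<lambda>p. kernel_sum K n (fst p) (snd p))"
  unfolding continuous_on_def kernel_sum_def
proof
  fix p :: "(nat \<Rightarrow> real) \<times> real" assume p: "p \<in> Sbar n \<times> {0..1}"
  show "((\<lambda>p. \<Sum>i = 1..n. K i (snd p - fst p i)) \<longlongrightarrow> (\<Sum>i = 1..n. K i (snd p - fst p i)))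
          (at p within Sbar n \<times> {0..1})"
  proof (rule tendsto_sum_ereal_not_PInfty)
    fix i assume i: "i \<in> {1..n}"
    then show "K i (snd p - fst p i) \<noteq> \<infinity>" using kernel_not_PInfty_on_Sbar[OF K] p by auto
    have "continuous_on {-1..1} (K i)" using K i by (simp add: kernel_function_continuous)
    moreover have "continuous_on (Sbar n \<times> {0..1}) (\<lambda>p. snd p - fst p i)"
      by (intro continuous_intros continuous_on_compose2[OF continuous_on_product_coordinates]) auto
    moreover have "(\<lambda>p. snd p - fst p i) ` (Sbar n \<times> {0..1}) \<subseteq> {-1..1}"
      using Sbar_coordinate[OF _ i] by force
    ultimately have "continuous_on (Sbar n \<times> {0..1}) (\<lambda>p. K i (snd p - fst p i))"
      by (rule continuous_on_compose2)
    then show "((\<lambda>p. K i (snd p - fst p i)) \<longlongrightarrow> K i (snd p - fst p i)) (at p within Sbar n \<times> {0..1})"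
      using p unfolding continuous_on_def by blast
  qed
qed

lemma kernel_sum_at_node:
  assumes K: "\<forall>i\<in>{1..n}. singular_kernel (K i)" and y: "y \<in> Sbar n" and i: "i \<in> {1..n}"
  shows "kernel_sum K n y (y i) = -\<infinity>"
proof -
  have "\<forall>k\<in>{1..n}. K k (y i - y k) \<noteq> \<infinity>"
    using kernel_not_PInfty_on_Sbar[OF _ y Sbar_coordinate[OF y i]] K by (simp add: singular_kernel_def)
  moreover have "K i (y i - y i) = -\<infinity>" using K i by (simp add: singular_kernel_def)
  ultimately show ?thesis
    unfolding kernel_sum_def using i by (simp add: sum.remove[of _ i] sum_Pinfty)
qed

lemma ypt_ne_if_kernel_sum_ne_MInfty:
  assumes "\<forall>i\<in>{1..n}. singular_kernel (K i)" "y \<in> Sbar n" "kernel_sum K n y t \<noteq> -\<infinity>"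
    and "1 \<le> k" "k \<le> n"
  shows "ypt n y k \<noteq> t"
  using assms kernel_sum_at_node[OF assms(1,2), of k] by (auto simp: ypt_def)

lemma eventually_mem_ypt_interval:
  assumes K: "\<forall>i\<in>{1..n}. singular_kernel (K i)" and y: "y \<in> Sbar n" and j: "j \<le> n"
    and t: "t \<in> {ypt n y j .. ypt n y (Suc j)}" and G: "kernel_sum K n y t \<noteq> -\<infinity>"
  shows "eventually (\<lambda>x. t \<in> {ypt n x j .. ypt n x (Suc j)}) (at y within S)"
proof -
  have "eventually (\<lambda>x. ypt n x j \<le> t) (at y within S)"
  proof (cases "j = 0")
    case False
    then have "ypt n y j < t" using t j ypt_ne_if_kernel_sum_ne_MInfty[OF K y G, of j] by auto
    from order_tendstoD(2)[OF tendsto_ypt this] show ?thesis by (rule eventually_mono) simp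
  qed (use t in \<open>simp add: ypt_def\<close>)
  moreover have "eventually (\<lambda>x. t \<le> ypt n x (Suc j)) (at y within S)"
  proof (cases "j = n")
    case False
    then have "t < ypt n y (Suc j)" using t j ypt_ne_if_kernel_sum_ne_MInfty[OF K y G, of "Suc j"] by auto
    from order_tendstoD(1)[OF tendsto_ypt this] show ?thesis by (rule eventually_mono) simp
  qed (use t in \<open>simp add: ypt_def\<close>)
  ultimately show ?thesis by eventually_elim simp
qed

lemma ypt_interval_locally_stable:
  assumes K: "\<forall>i\<in>{1..n}. singular_kernel (K i)" and y: "y \<in> Sbar n" and j: "j \<le> n"
    and G: "kernel_sum K n y t \<noteq> -\<infinity>"
  obtains V where "open V" "t \<in> V"
    "eventually (\<lambda>x. \<forall>s\<in>V. s \<in> {ypt n x j .. ypt n x (Suc j)} \<longrightarrow> s \<in> {ypt n y j .. ypt n y (Suc j)})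
       (at y within S)"
proof -
  obtain L where L: "open L" "t \<in> L" "eventually (\<lambda>x. \<forall>s\<in>L. ypt n x j \<le> s \<longrightarrow> ypt n y j \<le> s) (at y within S)"
  proof (cases "j = 0")
    case True
    then show ?thesis by (intro that[of UNIV]) (simp_all add: ypt_def)
  next
    case False
    then have "ypt n y j \<noteq> t" using j ypt_ne_if_kernel_sum_ne_MInfty[OF K y G, of j] by simp
    then show ?thesis using tendsto_lower_endpoint_stable[OF tendsto_ypt] that by blast
  qed
  obtain R where R: "open R" "t \<in> R"
    "eventually (\<lambda>x. \<forall>s\<in>R. s \<le> ypt n x (Suc j) \<longrightarrow> s \<le> ypt n y (Suc j)) (at y within S)"
  proof (cases "j = n")
    case True
    then show ?thesis by (intro that[of UNIV]) (simp_all add: ypt_def)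
  next
    case False
    then have "ypt n y (Suc j) \<noteq> t" using j ypt_ne_if_kernel_sum_ne_MInfty[OF K y G, of "Suc j"] by simp
    then show ?thesis using tendsto_upper_endpoint_stable[OF tendsto_ypt] that by blast
  qed
  show ?thesis
  proof (rule that[of "L \<inter> R"])
    show "eventually (\<lambda>x. \<forall>s\<in>L \<inter> R. s \<in> {ypt n x j .. ypt n x (Suc j)} \<longrightarrow> s \<in> {ypt n y j .. ypt n y (Suc j)})
       (at y within S)"
      using L(3) R(3) by eventually_elim auto
  qed (use L R in auto)
qed

lemma eventually_less_mfun:
  assumes K: "\<forall>i\<in>{1..n}. singular_kernel (K i)" and J: "\<forall>t\<in>{0..1}. J t \<noteq> \<infinity>"
    and j: "j \<le> n" and y: "y \<in> Sbar n" and c: "c < mfun J K n j y"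
  shows "eventually (\<lambda>x. c < mfun J K n j x) (at y within Sbar n)"
proof -
  have Kfun: "\<forall>i\<in>{1..n}. kernel_function (K i)" using K by (simp add: singular_kernel_def)
  obtain t where t: "t \<in> {ypt n y j .. ypt n y (Suc j)}" and ct: "c < J t + kernel_sum K n y t"
    using c by (auto simp: mfun_def less_SUP_iff Ffun_eq_kernel_sum)
  have t01: "t \<in> {0..1}" using ypt_interval_subset[OF y j] t by blast
  have "J t \<noteq> \<infinity>" using J t01 by blast
  \<comment> \<open>needed because \<open>\<infinity> + -\<infinity> = \<infinity>\<close> in \<open>ereal\<close>\<close>
  then have "kernel_sum K n y t \<noteq> -\<infinity>" using ct by (cases "J t") auto
  moreover have "kernel_sum K n y t \<noteq> \<infinity>" using kernel_sum_not_PInfty[OF Kfun y t01] .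
  moreover have "continuous_on (Sbar n) (\<lambda>x. kernel_sum K n x t)"
    by (rule continuous_on_compose2[OF continuous_on_kernel_sum[OF Kfun], of _ "\<lambda>x. (x, t)", simplified])
      (use t01 in \<open>auto intro!: continuous_on_Pair continuous_on_id continuous_on_const\<close>)
  ultimately have "((\<lambda>x. J t + kernel_sum K n x t) \<longlongrightarrow> J t + kernel_sum K n y t) (at y within Sbar n)"
    using y by (intro tendsto_add_ereal_general) (auto simp: continuous_on_def)
  then have "eventually (\<lambda>x. c < J t + kernel_sum K n x t) (at y within Sbar n)"
    using ct by (rule order_tendstoD(1))
  moreover have "eventually (\<lambda>x. t \<in> {ypt n x j .. ypt n x (Suc j)}) (at y within Sbar n)"
    using eventually_mem_ypt_interval[OF K y j t] \<open>kernel_sum K n y t \<noteq> -\<infinity>\<close> .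
  ultimately show ?thesis
  proof eventually_elim
    case (elim x)
    have "J t + kernel_sum K n x t \<le> mfun J K n j x"
      unfolding mfun_def Ffun_eq_kernel_sum[symmetric] using elim(2) by (rule SUP_upper)
    then show ?case using elim(1) by simp
  qed
qed

lemma eventually_at_within_open:
  assumes "open U" "y \<in> U"
  shows "eventually (\<lambda>x. x \<in> U \<inter> S) (at y within S)"
  using eventually_nhds_in_open[OF assms] unfolding eventually_at_filter by (rule eventually_mono) simp

lemma eventually_Ffun_le_near_MInfty:
  assumes K: "\<forall>i\<in>{1..n}. kernel_function (K i)" and J: "\<forall>t\<in>{0..1}. J t \<le> ereal M"
    and y: "y \<in> Sbar n" and t: "t \<in> {0..1}" and G: "kernel_sum K n y t = -\<infinity>"
  shows "\<exists>V. open V \<and> t \<in> V \<and> eventually (\<lambda>x. \<forall>s\<in>V \<inter> {0..1}. Ffun J K n x s \<le> ereal b) (at y within Sbar n)"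
proof -
  obtain U V where "open U" "open V" "y \<in> U" "t \<in> V" and small:
    "\<forall>x\<in>U \<inter> Sbar n. \<forall>s\<in>V \<inter> {0..1}. kernel_sum K n x s \<in> {..<ereal (b - M)}"
    using continuous_on_Times_rectangle[OF continuous_on_kernel_sum[OF K] y t open_lessThan, of "ereal (b - M)"] G
    by auto
  have bound: "Ffun J K n x s \<le> ereal b" if "x \<in> U \<inter> Sbar n" "s \<in> V \<inter> {0..1}" for x s
  proof -
    have "J s + kernel_sum K n x s \<le> ereal M + ereal (b - M)"
      using J small that by (intro add_mono) (auto intro: less_imp_le)
    then show ?thesis by (simp add: Ffun_eq_kernel_sum)
  qed
  have "eventually (\<lambda>x. \<forall>s\<in>V \<inter> {0..1}. Ffun J K n x s \<le> ereal b) (at y within Sbar n)"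
    using eventually_at_within_open[OF \<open>open U\<close> \<open>y \<in> U\<close>] by (rule eventually_mono) (simp add: bound)
  then show ?thesis using \<open>open V\<close> \<open>t \<in> V\<close> by blast
qed

lemma eventually_Ffun_le_near_finite:
  assumes K: "\<forall>i\<in>{1..n}. singular_kernel (K i)" and j: "j \<le> n" and y: "y \<in> Sbar n"
    and m: "mfun J K n j y \<le> ereal b0" and "b0 < b" and t: "t \<in> {0..1}"
    and G: "kernel_sum K n y t \<noteq> -\<infinity>"
  shows "\<exists>V. open V \<and> t \<in> V \<and> eventually (\<lambda>x. \<forall>s\<in>V \<inter> {0..1}.
           s \<in> {ypt n x j .. ypt n x (Suc j)} \<longrightarrow> Ffun J K n x s \<le> ereal b) (at y within Sbar n)"
proof -
  have Kfun: "\<forall>i\<in>{1..n}. kernel_function (K i)" using K by (simp add: singular_kernel_def)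
  obtain g where g: "kernel_sum K n y t = ereal g"
    using G kernel_sum_not_PInfty[OF Kfun y t] by (cases "kernel_sum K n y t") auto
  define e where "e = (b - b0) / 2"
  have "e > 0" using \<open>b0 < b\<close> by (simp add: e_def)
  obtain U V where "open U" "open V" "y \<in> U" "t \<in> V" and close:
    "\<forall>x\<in>U \<inter> Sbar n. \<forall>s\<in>V \<inter> {0..1}. kernel_sum K n x s \<in> {ereal (g - e)<..<ereal (g + e)}"
    using continuous_on_Times_rectangle[OF continuous_on_kernel_sum[OF Kfun] y t open_greaterThanLessThan,
        of "ereal (g - e)" "ereal (g + e)"] g \<open>e > 0\<close>
    by auto
  obtain W where "open W" "t \<in> W" and stable:
    "eventually (\<lambda>x. \<forall>s\<in>W. s \<in> {ypt n x j .. ypt n x (Suc j)} \<longrightarrow> s \<in> {ypt n y j .. ypt n y (Suc j)})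
       (at y within Sbar n)"
    using ypt_interval_locally_stable[OF K y j G] by blast
  have bound: "Ffun J K n x s \<le> ereal b"
    if x: "x \<in> U \<inter> Sbar n" and s: "s \<in> V \<inter> {0..1}" and sy: "s \<in> {ypt n y j .. ypt n y (Suc j)}" for x s
  proof -
    have Gx: "kernel_sum K n x s < ereal (g + e)" and Gy: "ereal (g - e) < kernel_sum K n y s"
      using close x s \<open>y \<in> U\<close> y by (meson IntI greaterThanLessThan_iff)+
    have "kernel_sum K n x s \<le> ereal (g - e) + ereal (2 * e)"
      using less_imp_le[OF Gx] by (simp add: add.commute)
    also have "\<dots> \<le> kernel_sum K n y s + ereal (2 * e)" using Gy by (intro add_right_mono) simp
    finally have "Ffun J K n x s \<le> Ffun J K n y s + ereal (2 * e)"
      by (simp add: Ffun_eq_kernel_sum add.assoc add_left_mono)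
    moreover have "Ffun J K n y s \<le> ereal b0"
      using SUP_upper[OF sy, of "Ffun J K n y"] m by (simp add: mfun_def)
    ultimately have "Ffun J K n x s \<le> ereal b0 + ereal (2 * e)"
      using add_right_mono order_trans by blast
    also have "\<dots> = ereal b" by (simp add: e_def field_simps)
    finally show ?thesis .
  qed
  have "eventually (\<lambda>x. \<forall>s\<in>V \<inter> W \<inter> {0..1}.
          s \<in> {ypt n x j .. ypt n x (Suc j)} \<longrightarrow> Ffun J K n x s \<le> ereal b) (at y within Sbar n)"
    using eventually_at_within_open[OF \<open>open U\<close> \<open>y \<in> U\<close>] stable by eventually_elim (simp add: bound)
  moreover have "open (V \<inter> W)" "t \<in> V \<inter> W" using \<open>open V\<close> \<open>open W\<close> \<open>t \<in> V\<close> \<open>t \<in> W\<close> by auto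
  ultimately show ?thesis by blast
qed

lemma eventually_mfun_less:
  assumes K: "\<forall>i\<in>{1..n}. singular_kernel (K i)" and J: "\<forall>t\<in>{0..1}. J t \<le> ereal M"
    and j: "j \<le> n" and y: "y \<in> Sbar n" and c: "mfun J K n j y < c"
  shows "eventually (\<lambda>x. mfun J K n j x < c) (at y within Sbar n)"
proof -
  have Kfun: "\<forall>i\<in>{1..n}. kernel_function (K i)" using K by (simp add: singular_kernel_def)
  obtain b0 where b0: "mfun J K n j y < ereal b0" "ereal b0 < c" using ereal_dense2[OF c] by blast
  obtain b where b: "ereal b0 < ereal b" "ereal b < c" using ereal_dense2[OF b0(2)] by blast
  let ?P = "\<lambda>x s. s \<in> {ypt n x j .. ypt n x (Suc j)} \<longrightarrow> Ffun J K n x s \<le> ereal b"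
  have "\<exists>V. open V \<and> t \<in> V \<and> eventually (\<lambda>x. \<forall>s\<in>V \<inter> {0..1}. ?P x s) (at y within Sbar n)"
    if t: "t \<in> {0..1}" for t
  proof (cases "kernel_sum K n y t = -\<infinity>")
    case True
    then obtain V where "open V" "t \<in> V"
      and "eventually (\<lambda>x. \<forall>s\<in>V \<inter> {0..1}. Ffun J K n x s \<le> ereal b) (at y within Sbar n)"
      using eventually_Ffun_le_near_MInfty[OF Kfun J y t] by blast
    then show ?thesis by (blast intro: eventually_mono)
  next
    case False
    then show ?thesis
      using eventually_Ffun_le_near_finite[OF K j y less_imp_le[OF b0(1)] _ t] b(1) by simp
  qed
  then have "eventually (\<lambda>x. \<forall>s\<in>{0..1}. ?P x s) (at y within Sbar n)"
    by (rule eventually_ball_compactI[OF compact_Icc])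
  moreover have "eventually (\<lambda>x. x \<in> Sbar n) (at y within Sbar n)"
    by (simp add: eventually_at_filter)
  ultimately show ?thesis
  proof eventually_elim
    case (elim x)
    then have "mfun J K n j x \<le> ereal b"
      unfolding mfun_def using ypt_interval_subset[OF elim(2) j] by (intro SUP_least) auto
    then show ?case using b(2) by simp
  qed
qed

theorem lemma3p3:
  fixes n :: nat and K :: "nat \<Rightarrow> real \<Rightarrow> ereal" and J :: "real \<Rightarrow> ereal" and j :: nat
  assumes "\<forall>i\<in>{1..n}. singular_kernel (K i)"
    and "n_field_function n J"
    and "j \<le> n"
  shows "continuous_on (Sbar n) (mfun J K n j)"
proof -
  obtain M where M: "\<forall>t\<in>{0..1}. J t \<le> ereal M"
    using assms(2) by (auto simp: n_field_function_def)
  then have "\<forall>t\<in>{0..1}. J t \<noteq> \<infinity>" by force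
  show ?thesis
    unfolding continuous_on_def
  proof (intro ballI order_tendstoI)
    fix y c assume "y \<in> Sbar n"
    show "c < mfun J K n j y \<Longrightarrow> eventually (\<lambda>x. c < mfun J K n j x) (at y within Sbar n)"
      using eventually_less_mfun[OF assms(1) \<open>\<forall>t\<in>{0..1}. J t \<noteq> \<infinity>\<close> assms(3) \<open>y \<in> Sbar n\<close>] .
    show "mfun J K n j y < c \<Longrightarrow> eventually (\<lambda>x. mfun J K n j x < c) (at y within Sbar n)"
      using eventually_mfun_less[OF assms(1) M assms(3) \<open>y \<in> Sbar n\<close>] .
  qed
qed
end
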